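(* Let $t\ne1$, $u\notin\{0,1,-1\}$ with $V_F(t,\omega(u))>0$, and assume $\mathfrak{g}_{t,u}\in\mathcal{E}(\mathcal{P}_{4,4})$. Then $\mathfrak{g}_{t,u}$ is irreducible in $\mathbb{C}[a,b,c,d]$ and $\mathfrak{g}_{t,u}\notin\Sigma_{4,4}$.
   Context: Variables $a,b,c,d$. Put $s_0=a^4+b^4+c^4+d^4-4abcd$; $s_1=T_{3,1}-12abcd$ with $T_{3,1}=\sum_{i\ne j}x_i^3x_j$; $s_2=\sum_{i<j}x_i^2x_j^2-6abcd$; $s_3=T_{2,1,1}-12abcd$ with $T_{2,1,1}=\sum_i x_i^2\sum_{j<k,\ j,k\ne i}x_jx_k$; $s_4=abcd$ (here $(x_1,x_2,x_3,x_4)=(a,b,c,d)$). Let $\omega(u)=u+\frac1u-2$ and $p^G_0(t,w)=(4t+2)w^2-3(t-1)^2w$, $p^G_1(t,w)=-2(t+1)^2w^2+2(t+1)(t-1)^2w$, $p^G_2(t,w)=4t^2w^2-2(t-1)^2(2t-1)w+2(t-1)^4$, $p^G_3(t,w)=2(t+1)^2w^2-(t-1)^2(t^2+3)w-2(t-1)^4$, $p^G_4(t,w)=2(t-1)^4w^2$, and for $u\ne0$, $\mathfrak{g}_{t,u}=u^2\sum_{i=0}^4p^G_i(t,\omega(u))s_i$. Let $V_F(t,w)=(3+6t-t^2)w^2-6(t-1)^2w$. $\mathcal{P}_{4,4}$ is the cone of real quartic forms in $a,b,c,d$ nonnegative on $\mathbb{R}^4$, $\Sigma_{4,4}$ the cone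 of sums of squares of real quadratic forms; $f\in\mathcal{P}_{4,4}\setminus\{0\}$ is extremal ($f\in\mathcal{E}(\mathcal{P}_{4,4})$) if $f=g+h$ with $g,h\in\mathcal{P}_{4,4}$ forces $g,h\in\mathbb{R}_{\ge0}f$. *)

theory Defs
  imports "HOL-Analysis.Analysis" "HOL-Library.Poly_Mapping" "HOL-Library.Numeral_Type"
begin

text \<open>Polynomials in the four variables a,b,c,d, indexed by the type 4
  (a = 0, b = 1, c = 2, d = 3).  A monomial is an exponent vector
  4 =>0 nat; a polynomial with coefficients in 'a is a finitely supported map from
  monomials to 'a (the monoid ring, with convolution product).  For 'a = complex
  this is exactly the ring C[a,b,c,d].\<close>

type_synonym mono4 = "4 \<Rightarrow>\<^sub>0 nat"

definition Var4 :: "4 \<Rightarrow> (mono4 \<Rightarrow>\<^sub>0 'a::zero_neq_one)" where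
  "Var4 i = Poly_Mapping.single (Poly_Mapping.single i 1) 1"

definition Const4 :: "'a::zero \<Rightarrow> (mono4 \<Rightarrow>\<^sub>0 'a)" where
  "Const4 c = Poly_Mapping.single 0 c"

definition peval4 :: "(mono4 \<Rightarrow>\<^sub>0 real) \<Rightarrow> (4 \<Rightarrow> real) \<Rightarrow> real" where
  "peval4 p x = (\<Sum>m\<in>Poly_Mapping.keys p. Poly_Mapping.lookup p m * (\<Prod>i\<in>UNIV. x i ^ Poly_Mapping.lookup m i))"

text \<open>Homogeneous form of degree k (the zero polynomial counts as a form).\<close>
definition is_form4 :: "nat \<Rightarrow> (mono4 \<Rightarrow>\<^sub>0 real) \<Rightarrow> bool" where
  "is_form4 k p \<longleftrightarrow> (\<forall>m\<in>Poly_Mapping.keys p. (\<Sum>i\<in>UNIV. Poly_Mapping.lookup m i) = k)"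

definition P44 :: "(mono4 \<Rightarrow>\<^sub>0 real) set" where
  "P44 = {p. is_form4 4 p \<and> (\<forall>x. peval4 p x \<ge> 0)}"

definition Sigma44 :: "(mono4 \<Rightarrow>\<^sub>0 real) set" where
  "Sigma44 = {p. \<exists>qs. (\<forall>q\<in>set qs. is_form4 2 q) \<and> p = sum_list (map (\<lambda>q. q * q) qs)}"

definition extremal_P44 :: "(mono4 \<Rightarrow>\<^sub>0 real) \<Rightarrow> bool" where
  "extremal_P44 f \<longleftrightarrow> f \<in> P44 \<and> f \<noteq> 0 \<and>
     (\<forall>g h. g \<in> P44 \<longrightarrow> h \<in> P44 \<longrightarrow> f = g + h \<longrightarrow>
        (\<exists>l\<ge>0. g = Const4 l * f) \<and> (\<exists>m\<ge>0. h = Const4 m * f))"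

definition abcd4 :: "mono4 \<Rightarrow>\<^sub>0 real" where
  "abcd4 = Var4 0 * Var4 1 * Var4 2 * Var4 3"

definition T31 :: "mono4 \<Rightarrow>\<^sub>0 real" where
  "T31 = (\<Sum>(i,j)\<in>{(i,j). i \<noteq> j}. Var4 i ^ 3 * Var4 j)"

definition T22 :: "mono4 \<Rightarrow>\<^sub>0 real" where
  "T22 = (\<Sum>(i,j)\<in>{(i,j). i < j}. Var4 i ^ 2 * Var4 j ^ 2)"

definition T211 :: "mono4 \<Rightarrow>\<^sub>0 real" where
  "T211 = (\<Sum>i\<in>UNIV. Var4 i ^ 2 * (\<Sum>(j,k)\<in>{(j,k). j < k \<and> j \<noteq> i \<and> k \<noteq> i}. Var4 j * Var4 k))"

definition s0 :: "mono4 \<Rightarrow>\<^sub>0 real" where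
  "s0 = (\<Sum>i\<in>UNIV. Var4 i ^ 4) - Const4 4 * abcd4"
definition s1 :: "mono4 \<Rightarrow>\<^sub>0 real" where
  "s1 = T31 - Const4 12 * abcd4"
definition s2 :: "mono4 \<Rightarrow>\<^sub>0 real" where
  "s2 = T22 - Const4 6 * abcd4"
definition s3 :: "mono4 \<Rightarrow>\<^sub>0 real" where
  "s3 = T211 - Const4 12 * abcd4"
definition s4 :: "mono4 \<Rightarrow>\<^sub>0 real" where
  "s4 = abcd4"

definition omega :: "real \<Rightarrow> real" where
  "omega u = u + 1 / u - 2"

definition pG0 :: "real \<Rightarrow> real \<Rightarrow> real" where
  "pG0 t w = (4*t + 2) * w^2 - 3 * (t - 1)^2 * w"
definition pG1 :: "real \<Rightarrow> real \<Rightarrow> real" where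
  "pG1 t w = - 2 * (t + 1)^2 * w^2 + 2 * (t + 1) * (t - 1)^2 * w"
definition pG2 :: "real \<Rightarrow> real \<Rightarrow> real" where
  "pG2 t w = 4 * t^2 * w^2 - 2 * (t - 1)^2 * (2*t - 1) * w + 2 * (t - 1)^4"
definition pG3 :: "real \<Rightarrow> real \<Rightarrow> real" where
  "pG3 t w = 2 * (t + 1)^2 * w^2 - (t - 1)^2 * (t^2 + 3) * w - 2 * (t - 1)^4"
definition pG4 :: "real \<Rightarrow> real \<Rightarrow> real" where
  "pG4 t w = 2 * (t - 1)^4 * w^2"

definition gG :: "real \<Rightarrow> real \<Rightarrow> (mono4 \<Rightarrow>\<^sub>0 real)" where
  "gG t u = Const4 (u^2) *
     (Const4 (pG0 t (omega u)) * s0 + Const4 (pG1 t (omega u)) * s1 + Const4 (pG2 t (omega u)) * s2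
      + Const4 (pG3 t (omega u)) * s3 + Const4 (pG4 t (omega u)) * s4)"

definition VF :: "real \<Rightarrow> real \<Rightarrow> real" where
  "VF t w = (3 + 6*t - t^2) * w^2 - 6 * (t - 1)^2 * w"

definition complexify4 :: "(mono4 \<Rightarrow>\<^sub>0 real) \<Rightarrow> (mono4 \<Rightarrow>\<^sub>0 complex)" where
  "complexify4 p = Poly_Mapping.map complex_of_real p"

end

theory Submission
  imports Defs "HOL-Computational_Algebra.Polynomial"
begin

text \<open>Over \<open>\<complex>\<close> the quartic \<open>g = gG t u\<close> has singular zeros at \<open>(1,1,u,u)\<close>, \<open>(u,u,1,1)\<close>
  and \<open>(1,u,1,u)\<close>, which are exchanged by permutations of the variables fixing \<open>g\<close>. At
  \<open>(1,1,u,u)\<close> the Hessian of \<open>g\<close> is diagonal with nonzero entries on a 3-dimensional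
  subspace (this is where \<open>t \<noteq> 1\<close>, \<open>u \<noteq> \<plusminus>1\<close> and \<open>V\<^sub>F > 0\<close> enter), so it is not a
  product of two linear forms, and in a factorisation \<open>g = p q\<close> exactly one factor vanishes
  at each of the three points. One factor, of degree \<open>k \<in> {1,2,3}\<close>, therefore vanishes at
  two of them while the other does not, so it is singular at both; on the line through them
  it has degree \<open>\<le> 3\<close> and double zeros at both ends, hence vanishes identically, whereas
  \<open>g\<close> does not vanish at the sum of the two points. If \<open>g\<close> were a sum of squares,
  extremality would make it a multiple of a single square \<open>q\<^sup>2\<close>, and both factors of
  \<open>q \<cdot> q\<close> would vanish at \<open>(1,1,u,u)\<close>.\<close>

section \<open>Evaluating polynomials\<close>

definition pm_lift :: "('a::zero \<Rightarrow> 'b::comm_ring_1) \<Rightarrow> (mono4 \<Rightarrow> 'b) \<Rightarrow> (mono4 \<Rightarrow>\<^sub>0 'a) \<Rightarrow> 'b" where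
  "pm_lift \<psi> \<phi> p = (\<Sum>m\<in>Poly_Mapping.keys p. \<psi> (Poly_Mapping.lookup p m) * \<phi> m)"

lemma pm_lift_superset:
  assumes "finite S" "Poly_Mapping.keys p \<subseteq> S" "\<psi> 0 = 0"
  shows "pm_lift \<psi> \<phi> p = (\<Sum>m\<in>S. \<psi> (Poly_Mapping.lookup p m) * \<phi> m)"
  unfolding pm_lift_def
  by (rule sum.mono_neutral_left) (use assms in \<open>auto simp: in_keys_iff\<close>)

lemma pm_lift_zero [simp]: "pm_lift \<psi> \<phi> 0 = 0"
  by (simp add: pm_lift_def)

lemma pm_lift_single:
  "\<psi> 0 = 0 \<Longrightarrow> pm_lift \<psi> \<phi> (Poly_Mapping.single m c) = \<psi> c * \<phi> m"
  by (cases "c = 0") (simp_all add: pm_lift_def)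

lemma pm_lift_add:
  assumes "\<psi> 0 = 0" "\<And>x y. \<psi> (x + y) = \<psi> x + \<psi> y"
  shows "pm_lift \<psi> \<phi> (p + q) = pm_lift \<psi> \<phi> p + pm_lift \<psi> \<phi> q"
proof -
  let ?S = "Poly_Mapping.keys p \<union> Poly_Mapping.keys q"
  have "finite ?S" by simp
  with keys_add[of p q] show ?thesis
    using pm_lift_superset[of ?S _ \<psi> \<phi>] assms
    by (simp add: lookup_add distrib_right sum.distrib)
qed

lemma pm_lift_sum:
  assumes "\<psi> 0 = 0" "\<And>x y. \<psi> (x + y) = \<psi> x + \<psi> y"
  shows "pm_lift \<psi> \<phi> (\<Sum>i\<in>I. f i) = (\<Sum>i\<in>I. pm_lift \<psi> \<phi> (f i))"
  by (induction I rule: infinite_finite_induct) (simp_all add: pm_lift_add[OF assms])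

lemma sum_single_lookup:
  "(\<Sum>m\<in>Poly_Mapping.keys p. Poly_Mapping.single m (Poly_Mapping.lookup p m)) = p"
  by (rule poly_mapping_eqI) (simp add: lookup_sum lookup_single when_def in_keys_iff)

lemma pm_lift_mult:
  fixes \<psi> :: "'a::comm_ring_1 \<Rightarrow> 'b::comm_ring_1"
  assumes "\<psi> 0 = 0" "\<And>x y. \<psi> (x + y) = \<psi> x + \<psi> y" "\<And>x y. \<psi> (x * y) = \<psi> x * \<psi> y"
    and "\<And>m m'. \<phi> (m + m') = \<phi> m * \<phi> m'"
  shows "pm_lift \<psi> \<phi> (p * q) = pm_lift \<psi> \<phi> p * pm_lift \<psi> \<phi> q"
proof -
  have "p * q = (\<Sum>m\<in>Poly_Mapping.keys p. \<Sum>m'\<in>Poly_Mapping.keys q.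
      Poly_Mapping.single (m + m') (Poly_Mapping.lookup p m * Poly_Mapping.lookup q m'))"
    by (subst (1 2) sum_single_lookup[symmetric]) (simp add: sum_product mult_single)
  then have "pm_lift \<psi> \<phi> (p * q) = (\<Sum>m\<in>Poly_Mapping.keys p. \<Sum>m'\<in>Poly_Mapping.keys q.
      \<psi> (Poly_Mapping.lookup p m) * \<phi> m * (\<psi> (Poly_Mapping.lookup q m') * \<phi> m'))"
    by (simp add: pm_lift_sum[OF assms(1,2)] pm_lift_single[of \<psi>, OF assms(1)] assms(3,4) mult_ac)
  then show ?thesis
    by (simp add: pm_lift_def sum_product)
qed

definition mono_eval :: "(4 \<Rightarrow> 'a::comm_ring_1) \<Rightarrow> mono4 \<Rightarrow> 'a" where
  "mono_eval z m = (\<Prod>i\<in>UNIV. z i ^ Poly_Mapping.lookup m i)"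

lemma mono_eval_add: "mono_eval z (m + m') = mono_eval z m * mono_eval z m'"
  by (simp add: mono_eval_def lookup_add power_add prod.distrib)

lemma mono_eval_0 [simp]: "mono_eval z 0 = 1"
  by (simp add: mono_eval_def)

lemma mono_eval_single: "mono_eval z (Poly_Mapping.single i 1) = z i"
proof -
  have "mono_eval z (Poly_Mapping.single i 1) = (\<Prod>j\<in>UNIV. if i = j then z j else 1)"
    unfolding mono_eval_def by (rule prod.cong) (auto simp: lookup_single when_def)
  then show ?thesis by simp
qed

definition ceval :: "(mono4 \<Rightarrow>\<^sub>0 complex) \<Rightarrow> (4 \<Rightarrow> complex) \<Rightarrow> complex" where
  "ceval p z = pm_lift id (mono_eval z) p"

definition ceval_real :: "(mono4 \<Rightarrow>\<^sub>0 real) \<Rightarrow> (4 \<Rightarrow> complex) \<Rightarrow> complex" where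
  "ceval_real p z = pm_lift of_real (mono_eval z) p"

lemma ceval_mult: "ceval (p * q) z = ceval p z * ceval q z"
  unfolding ceval_def by (rule pm_lift_mult) (simp_all add: mono_eval_add)

lemma peval4_eq_pm_lift: "peval4 p x = pm_lift id (mono_eval x) p"
  by (simp add: peval4_def pm_lift_def mono_eval_def)

lemma peval4_zero: "peval4 0 x = 0"
  by (simp add: peval4_def)

lemma peval4_add: "peval4 (p + q) x = peval4 p x + peval4 q x"
  unfolding peval4_eq_pm_lift by (rule pm_lift_add) simp_all

lemma peval4_mult: "peval4 (p * q) x = peval4 p x * peval4 q x"
  unfolding peval4_eq_pm_lift by (rule pm_lift_mult) (simp_all add: mono_eval_add)

context
  fixes z :: "4 \<Rightarrow> complex"
begin

lemma ceval_real_add: "ceval_real (p + q) z = ceval_real p z + ceval_real q z"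
  unfolding ceval_real_def by (rule pm_lift_add) simp_all

lemma ceval_real_diff: "ceval_real (p - q) z = ceval_real p z - ceval_real q z"
  using ceval_real_add[of "p - q" q] by simp

lemma ceval_real_mult: "ceval_real (p * q) z = ceval_real p z * ceval_real q z"
  unfolding ceval_real_def by (rule pm_lift_mult) (simp_all add: mono_eval_add)

lemma ceval_real_sum: "ceval_real (\<Sum>i\<in>I. f i) z = (\<Sum>i\<in>I. ceval_real (f i) z)"
  unfolding ceval_real_def by (rule pm_lift_sum) simp_all

lemma ceval_real_Var4: "ceval_real (Var4 i) z = z i"
  using mono_eval_single[of z i] by (simp add: ceval_real_def Var4_def pm_lift_single)

lemma ceval_real_Const4: "ceval_real (Const4 c) z = of_real c"
  by (simp add: ceval_real_def Const4_def pm_lift_single)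

lemma ceval_real_power: "ceval_real (p ^ n) z = ceval_real p z ^ n"
proof -
  have "ceval_real 1 z = 1"
    by (simp add: ceval_real_def pm_lift_single flip: single_one)
  then show ?thesis by (induction n) (simp_all add: ceval_real_mult)
qed

end

lemma keys_complexify4: "Poly_Mapping.keys (complexify4 p) = Poly_Mapping.keys p"
  by (auto simp: complexify4_def in_keys_iff Poly_Mapping.map.rep_eq when_def)

lemma lookup_complexify4:
  "Poly_Mapping.lookup (complexify4 p) m = of_real (Poly_Mapping.lookup p m)"
  by (simp add: complexify4_def Poly_Mapping.map.rep_eq when_def)

lemma ceval_complexify4: "ceval (complexify4 p) z = ceval_real p z"
  by (simp add: ceval_def ceval_real_def pm_lift_def keys_complexify4 lookup_complexify4)

lemma complexify4_mult: "complexify4 (p * q) = complexify4 p * complexify4 q"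
proof -
  have "complexify4 p
      = pm_lift (\<lambda>c. Poly_Mapping.single 0 (of_real c)) (\<lambda>m. Poly_Mapping.single m 1) p"
    for p
    by (subst sum_single_lookup[symmetric])
      (simp add: pm_lift_def keys_complexify4 lookup_complexify4 mult_single)
  then show ?thesis
    by (simp only:) (rule pm_lift_mult; simp add: single_add mult_single)
qed

section \<open>Homogeneous polynomials\<close>

definition mono_degree :: "mono4 \<Rightarrow> nat" where
  "mono_degree m = (\<Sum>i\<in>UNIV. Poly_Mapping.lookup m i)"

lemma mono_degree_add: "mono_degree (m + m') = mono_degree m + mono_degree m'"
  by (simp add: mono_degree_def lookup_add sum.distrib)

definition homogeneous4 :: "nat \<Rightarrow> (mono4 \<Rightarrow>\<^sub>0 'a::zero) \<Rightarrow> bool" where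
  "homogeneous4 k p \<longleftrightarrow> (\<forall>m\<in>Poly_Mapping.keys p. mono_degree m = k)"

lemma is_form4_iff_homogeneous4: "is_form4 k p \<longleftrightarrow> homogeneous4 k p"
  by (simp add: is_form4_def homogeneous4_def mono_degree_def)

lemma homogeneous4_complexify4: "homogeneous4 k (complexify4 p) \<longleftrightarrow> homogeneous4 k p"
  by (simp add: homogeneous4_def keys_complexify4)

lemma homogeneous4_unique:
  assumes "homogeneous4 k p" "homogeneous4 j p" "p \<noteq> 0"
  shows "k = j"
proof -
  obtain m where "m \<in> Poly_Mapping.keys p"
    using assms(3) by (metis keys_eq_empty equals0I)
  with assms(1,2) show ?thesis unfolding homogeneous4_def by metis
qed

lemma homogeneous4_mult:
  fixes p q :: "mono4 \<Rightarrow>\<^sub>0 'a::comm_semiring_1"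
  assumes "homogeneous4 j p" "homogeneous4 k q"
  shows "homogeneous4 (j + k) (p * q)"
  unfolding homogeneous4_def
proof
  fix m assume "m \<in> Poly_Mapping.keys (p * q)"
  then obtain m1 m2 where "m = m1 + m2" "m1 \<in> Poly_Mapping.keys p" "m2 \<in> Poly_Mapping.keys q"
    using keys_mult by blast
  with assms show "mono_degree m = j + k"
    by (simp add: homogeneous4_def mono_degree_add)
qed

lemma homogeneous4_add: "homogeneous4 k p \<Longrightarrow> homogeneous4 k q \<Longrightarrow> homogeneous4 k (p + q)"
  using keys_add[of p q] unfolding homogeneous4_def by blast

lemma homogeneous4_one: "homogeneous4 0 (1 :: mono4 \<Rightarrow>\<^sub>0 'a::zero_neq_one)"
  by (simp add: homogeneous4_def mono_degree_def flip: single_one)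

lemma ceval_scale:
  assumes "homogeneous4 k p"
  shows "ceval p (\<lambda>i. c * z i) = c ^ k * ceval p z"
proof -
  have "mono_eval (\<lambda>i. c * z i) m = c ^ k * mono_eval z m" if "m \<in> Poly_Mapping.keys p" for m
  proof -
    have "(\<Prod>i\<in>UNIV. c ^ Poly_Mapping.lookup m i) = c ^ k"
      using assms that by (simp add: homogeneous4_def mono_degree_def power_sum[symmetric])
    then show ?thesis
      by (simp add: mono_eval_def power_mult_distrib prod.distrib)
  qed
  then show ?thesis
    by (simp add: ceval_def pm_lift_def sum_distrib_left algebra_simps)
qed

lemma monom_factor_coeff_eq_0:
  fixes A B :: "'a::idom poly"
  assumes "A * B = monom c d" "c \<noteq> 0" "j \<noteq> degree A"
  shows "coeff A j = 0"
proof -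
  have AB: "A \<noteq> 0" "B \<noteq> 0" using assms(1,2) by auto
  have "order 0 A + order 0 B = d"
    using assms(1,2) by (metis order_0_monom order_mult monom_eq_0_iff)
  moreover have "degree A + degree B = d"
    using assms(1,2) AB by (metis degree_monom_eq degree_mult_eq)
  moreover have "order 0 A \<le> degree A" "order 0 B \<le> degree B"
    using AB by (simp_all add: order_degree)
  ultimately have "monom 1 (degree A) dvd A"
    using AB by (simp add: monom_1_dvd_iff)
  then show ?thesis
    using assms(3) by (auto simp: monom_1_dvd_iff' coeff_eq_0 linorder_neq_iff)
qed

(* The polynomial \<Sum>\<^sub>j p\<^sub>j X\<^sup>j whose coefficients are the homogeneous components of p. *)
definition hom_components :: "(mono4 \<Rightarrow>\<^sub>0 complex) \<Rightarrow> (mono4 \<Rightarrow>\<^sub>0 complex) poly" where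
  "hom_components p = pm_lift (\<lambda>c. [:Poly_Mapping.single 0 c:])
     (\<lambda>m. monom (Poly_Mapping.single m 1) (mono_degree m)) p"

lemma hom_components_mult: "hom_components (p * q) = hom_components p * hom_components q"
  unfolding hom_components_def
  by (rule pm_lift_mult)
    (simp_all add: single_add mult_single mult_to_poly mult_monom mono_degree_add mult.commute)

lemma lookup_coeff_hom_components:
  "Poly_Mapping.lookup (coeff (hom_components p) j) m =
     (if mono_degree m = j then Poly_Mapping.lookup p m else 0)"
proof -
  have "coeff (hom_components p) j = (\<Sum>m'\<in>Poly_Mapping.keys p.
      if mono_degree m' = j then Poly_Mapping.single m' (Poly_Mapping.lookup p m') else 0)"
    unfolding hom_components_def pm_lift_def coeff_sum
    by (intro sum.cong refl) (auto simp: mult_single)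
  then have "Poly_Mapping.lookup (coeff (hom_components p) j) m = (\<Sum>m'\<in>Poly_Mapping.keys p.
      Poly_Mapping.lookup (if mono_degree m' = j
        then Poly_Mapping.single m' (Poly_Mapping.lookup p m') else 0) m)"
    by (simp only: lookup_sum)
  also have "\<dots> = (\<Sum>m'\<in>Poly_Mapping.keys p.
      if m = m' then (if mono_degree m = j then Poly_Mapping.lookup p m else 0) else 0)"
    by (rule sum.cong) (auto simp: lookup_single when_def)
  finally show ?thesis
    by (simp add: in_keys_iff)
qed

lemma hom_components_homogeneous:
  assumes "homogeneous4 d p"
  shows "hom_components p = monom p d"
proof (intro poly_eqI poly_mapping_eqI)
  fix j m
  show "Poly_Mapping.lookup (coeff (hom_components p) j) m
      = Poly_Mapping.lookup (coeff (monom p d) j) m"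
    using assms by (auto simp: lookup_coeff_hom_components coeff_monom homogeneous4_def in_keys_iff)
qed

lemma homogeneous4_if_hom_components:
  assumes "\<And>j. j \<noteq> k \<Longrightarrow> coeff (hom_components p) j = 0"
  shows "homogeneous4 k p"
  unfolding homogeneous4_def
proof
  fix m assume "m \<in> Poly_Mapping.keys p"
  then have "coeff (hom_components p) (mono_degree m) \<noteq> 0"
    using lookup_coeff_hom_components[of p "mono_degree m" m] by (auto simp: in_keys_iff)
  then show "mono_degree m = k" using assms by blast
qed

lemma homogeneous4_factors:
  fixes p q F :: "mono4 \<Rightarrow>\<^sub>0 complex"
  assumes "p * q = F" "F \<noteq> 0" "homogeneous4 d F"
  shows "\<exists>k\<le>d. homogeneous4 k p \<and> homogeneous4 (d - k) q"
proof -
  have pq: "hom_components p * hom_components q = monom F d"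
    using assms by (metis hom_components_mult hom_components_homogeneous)
  then have qp: "hom_components q * hom_components p = monom F d"
    by (simp add: mult.commute)
  have "degree (hom_components p) + degree (hom_components q) = d"
    using pq assms(2) by (metis degree_monom_eq degree_mult_eq monom_eq_0_iff mult_zero_left
        mult_zero_right)
  moreover have "homogeneous4 (degree (hom_components p)) p"
    using monom_factor_coeff_eq_0[OF pq assms(2)] by (intro homogeneous4_if_hom_components)
  moreover have "homogeneous4 (degree (hom_components q)) q"
    using monom_factor_coeff_eq_0[OF qp assms(2)] by (intro homogeneous4_if_hom_components)
  ultimately show ?thesis
    by (intro exI[of _ "degree (hom_components p)"]) auto
qed

lemma homogeneous4_0_unit:
  fixes p :: "mono4 \<Rightarrow>\<^sub>0 'a::field"
  assumes "homogeneous4 0 p" "p \<noteq> 0"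
  shows "p dvd 1"
proof -
  have "Poly_Mapping.keys p = {0}"
  proof -
    have "Poly_Mapping.keys p \<subseteq> {0}"
      using assms(1) by (auto simp: homogeneous4_def mono_degree_def intro: poly_mapping_eqI)
    then show ?thesis using assms(2) by (metis keys_eq_empty subset_singletonD)
  qed
  then have p: "p = Poly_Mapping.single 0 (Poly_Mapping.lookup p 0)"
    using sum_single_lookup[of p] by simp
  then have "Poly_Mapping.lookup p 0 \<noteq> 0"
    using assms(2) by (metis single_zero)
  then have "p * Poly_Mapping.single 0 (1 / Poly_Mapping.lookup p 0) = 1"
    by (subst p) (simp add: mult_single)
  then show ?thesis by (metis dvdI)
qed

section \<open>Restriction to a line\<close>

definition line_poly :: "(mono4 \<Rightarrow>\<^sub>0 complex) \<Rightarrow> (4 \<Rightarrow> complex) \<Rightarrow> (4 \<Rightarrow> complex) \<Rightarrow> complex poly" where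
  "line_poly p x y = pm_lift (\<lambda>c. [:c:]) (mono_eval (\<lambda>i. [:x i, y i:])) p"

lemma poly_line_poly: "poly (line_poly p x y) e = ceval p (\<lambda>i. x i + e * y i)"
  by (simp add: line_poly_def ceval_def pm_lift_def mono_eval_def poly_sum poly_prod algebra_simps)

lemma line_poly_mult: "line_poly (p * q) x y = line_poly p x y * line_poly q x y"
  unfolding line_poly_def by (rule pm_lift_mult) (simp_all add: mono_eval_add)

lemma coeff_0_line_poly: "coeff (line_poly p x y) 0 = ceval p x"
  using poly_line_poly[of p x y 0] by (simp add: poly_0_coeff_0)

lemma coeff_1_eq_poly_pderiv: "coeff p 1 = poly (pderiv p) 0"
  by (simp add: poly_0_coeff_0 coeff_pderiv)

lemma coeff_1_mono_eval_line:
  fixes x y :: "4 \<Rightarrow> complex"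
  shows "coeff (mono_eval (\<lambda>i. [:x i, y i:]) m) 1 = (\<Sum>i\<in>UNIV.
     (\<Prod>j\<in>UNIV - {i}. x j ^ Poly_Mapping.lookup m j) *
     (of_nat (Poly_Mapping.lookup m i) * x i ^ (Poly_Mapping.lookup m i - 1) * y i))"
  unfolding mono_eval_def coeff_1_eq_poly_pderiv
  by (simp add: pderiv_prod pderiv_power pderiv_pCons poly_sum poly_prod mult_ac)

lemma coeff_1_line_poly:
  "coeff (line_poly p x y) 1 = (\<Sum>m\<in>Poly_Mapping.keys p.
     Poly_Mapping.lookup p m * coeff (mono_eval (\<lambda>i. [:x i, y i:]) m) 1)"
  by (simp add: line_poly_def pm_lift_def coeff_sum)

lemma coeff_1_line_poly_add:
  "coeff (line_poly p x (\<lambda>i. y i + y' i)) 1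
     = coeff (line_poly p x y) 1 + coeff (line_poly p x y') 1"
  unfolding coeff_1_line_poly coeff_1_mono_eval_line
  by (simp add: algebra_simps sum.distrib sum_distrib_left)

lemma degree_line_poly:
  assumes "homogeneous4 k p"
  shows "degree (line_poly p x y) \<le> k"
  unfolding line_poly_def pm_lift_def
proof (rule degree_sum_le)
  fix m assume m: "m \<in> Poly_Mapping.keys p"
  have "degree ([:Poly_Mapping.lookup p m:] * mono_eval (\<lambda>i. [:x i, y i:]) m)
      \<le> degree (mono_eval (\<lambda>i. [:x i, y i:]) m)"
    using degree_mult_le[of "[:Poly_Mapping.lookup p m:]"] by simp
  also have "\<dots> \<le> (\<Sum>i\<in>UNIV. degree ([:x i, y i:] ^ Poly_Mapping.lookup m i))"
    unfolding mono_eval_def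
    using degree_prod_sum_le[of UNIV "\<lambda>i. [:x i, y i:] ^ Poly_Mapping.lookup m i"]
    by (simp add: o_def)
  also have "\<dots> \<le> (\<Sum>i\<in>UNIV. Poly_Mapping.lookup m i)"
  proof (rule sum_mono)
    fix i
    have "degree ([:x i, y i:] ^ Poly_Mapping.lookup m i)
        \<le> degree [:x i, y i:] * Poly_Mapping.lookup m i"
      by (rule degree_power_le)
    also have "\<dots> \<le> Poly_Mapping.lookup m i" by simp
    finally show "degree ([:x i, y i:] ^ Poly_Mapping.lookup m i) \<le> Poly_Mapping.lookup m i" .
  qed
  also have "\<dots> = k"
    using assms m by (simp add: homogeneous4_def mono_degree_def)
  finally show "degree ([:Poly_Mapping.lookup p m:] * mono_eval (\<lambda>i. [:x i, y i:]) m) \<le> k" .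
qed simp

lemma poly_eq_sum_upto:
  fixes p :: "'a::comm_semiring_1 poly"
  assumes "degree p \<le> n"
  shows "poly p x = (\<Sum>i\<le>n. coeff p i * x ^ i)"
  unfolding poly_altdef
  by (rule sum.mono_neutral_left) (use assms in \<open>auto simp: coeff_eq_0\<close>)

(* Five-point difference formulas, exact in degree at most 4. *)
lemma coeff_1_from_values:
  fixes p :: "'a::field_char_0 poly"
  assumes "degree p \<le> 4"
  shows "coeff p 1 = (poly p (-2) - 8 * poly p (-1) + 8 * poly p 1 - poly p 2) / 12"
  by (simp add: poly_eq_sum_upto[OF assms] eval_nat_numeral field_simps)

lemma coeff_2_from_values:
  fixes p :: "'a::field_char_0 poly"
  assumes "degree p \<le> 4"
  shows "coeff p 2
    = (- poly p 2 + 16 * poly p 1 - 30 * poly p 0 + 16 * poly p (-1) - poly p (-2)) / 24"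
  by (simp add: poly_eq_sum_upto[OF assms] eval_nat_numeral field_simps)

lemma poly_line_poly_reflect:
  assumes "homogeneous4 k p" "r \<noteq> 0"
  shows "poly (line_poly p x y) r = r ^ k * poly (line_poly p y x) (1 / r)"
proof -
  have "poly (line_poly p x y) r = ceval p (\<lambda>i. r * (y i + (1 / r) * x i))"
    using assms(2) by (simp add: poly_line_poly algebra_simps)
  then show ?thesis
    by (simp add: ceval_scale[OF assms(1)] poly_line_poly)
qed

lemma double_zeros_reflect:
  fixes G H :: "complex poly"
  assumes "degree G \<le> 3" "degree H \<le> 3" "1 \<le> k" "k \<le> 3"
    and "coeff G 0 = 0" "coeff G 1 = 0" "coeff H 0 = 0" "coeff H 1 = 0"
    and reflect: "\<And>r. r \<noteq> 0 \<Longrightarrow> poly G r = r ^ k * poly H (1 / r)"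
  shows "G = 0"
proof -
  (* Multiplied by r^3 the reflection identity reads g2 r^5 + g3 r^6 = h2 r^(k+1) + h3 r^k,
     and the exponents on the two sides are distinct. *)
  define Q where "Q = monom (coeff G 2) 5 + monom (coeff G 3) 6
    - monom (coeff H 2) (k + 1) - monom (coeff H 3) k"
  have G: "poly G r = coeff G 2 * r^2 + coeff G 3 * r^3" for r
    using assms by (simp add: poly_eq_sum_upto eval_nat_numeral)
  have H: "poly H r = coeff H 2 * r^2 + coeff H 3 * r^3" for r
    using assms by (simp add: poly_eq_sum_upto eval_nat_numeral)
  have "poly Q r = 0" for r
  proof (cases "r = 0")
    case False
    have "coeff G 2 * r ^ 5 + coeff G 3 * r ^ 6 = r ^ 3 * poly G r"
      by (simp add: G algebra_simps flip: power_add)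
    also have "\<dots> = r ^ 3 * (r ^ k * poly H (1 / r))"
      using False by (simp add: reflect)
    also have "\<dots> = coeff H 2 * r ^ (k + 1) + coeff H 3 * r ^ k"
      using False by (simp add: H power_add power_divide field_simps eval_nat_numeral)
    finally show ?thesis
      by (simp add: Q_def poly_monom)
  qed (use assms(3) in \<open>simp add: Q_def poly_monom\<close>)
  then have "Q = 0" using poly_all_0_iff_0 by blast
  then have "coeff Q 5 = 0" "coeff Q 6 = 0" by simp_all
  with assms(4) have "coeff G 2 = 0" "coeff G 3 = 0"
    by (simp_all add: Q_def coeff_monom)
  show ?thesis
  proof (rule poly_eqI)
    fix n
    show "coeff G n = coeff 0 n"
    proof (cases "n \<le> 3")
      case True
      then have "n \<in> {0, 1, 2, 3}" by auto
      with assms(5,6) \<open>coeff G 2 = 0\<close> \<open>coeff G 3 = 0\<close> show ?thesis by auto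
    qed (use assms(1) in \<open>simp add: coeff_eq_0\<close>)
  qed
qed

section \<open>Singular zeros and factorisations\<close>

definition singular_zero :: "(mono4 \<Rightarrow>\<^sub>0 complex) \<Rightarrow> (4 \<Rightarrow> complex) \<Rightarrow> bool" where
  "singular_zero p x \<longleftrightarrow> ceval p x = 0 \<and> (\<forall>y. coeff (line_poly p x y) 1 = 0)"

lemma vanishes_at_sum_of_double_zeros:
  assumes hom: "homogeneous4 k p" and k: "1 \<le> k" "k \<le> 3"
    and zeros: "ceval p x = 0" "ceval p y = 0"
    and double: "coeff (line_poly p x y) 1 = 0" "coeff (line_poly p y x) 1 = 0"
  shows "ceval p (\<lambda>i. x i + y i) = 0"
proof -
  have "line_poly p x y = 0"
  proof (rule double_zeros_reflect)
    show "degree (line_poly p x y) \<le> 3" "degree (line_poly p y x) \<le> 3"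
      using order_trans[OF degree_line_poly[OF hom] k(2)] by blast+
    show "poly (line_poly p x y) r = r ^ k * poly (line_poly p y x) (1 / r)" if "r \<noteq> 0" for r
      by (rule poly_line_poly_reflect[OF hom that])
  qed (use k zeros double in \<open>simp_all add: coeff_0_line_poly\<close>)
  then show ?thesis
    using poly_line_poly[of p x y 1] by simp
qed

lemma coeff_1_line_poly_mult:
  "coeff (line_poly (p * q) x y) 1 =
     ceval p x * coeff (line_poly q x y) 1 + coeff (line_poly p x y) 1 * ceval q x"
  by (simp add: line_poly_mult coeff_mult coeff_0_line_poly)

lemma coeff_2_line_poly_mult:
  assumes "ceval p x = 0" "ceval q x = 0"
  shows "coeff (line_poly (p * q) x y) 2 = coeff (line_poly p x y) 1 * coeff (line_poly q x y) 1"
  using assms by (simp add: line_poly_mult coeff_mult eval_nat_numeral coeff_0_line_poly)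

lemma factor_vanishes_at_sum:
  assumes "p * q = F" "homogeneous4 k p" "1 \<le> k" "k \<le> 3"
    and "singular_zero F x" "singular_zero F y"
    and "ceval p x = 0" "ceval p y = 0" "ceval q x \<noteq> 0" "ceval q y \<noteq> 0"
  shows "ceval F (\<lambda>i. x i + y i) = 0"
proof -
  have "coeff (line_poly p x' y') 1 = 0"
    if "singular_zero F x'" "ceval p x' = 0" "ceval q x' \<noteq> 0" for x' y'
    using that coeff_1_line_poly_mult[of p q x' y'] assms(1) by (simp add: singular_zero_def)
  then have "coeff (line_poly p x y) 1 = 0" "coeff (line_poly p y x) 1 = 0"
    using assms(5-10) by blast+
  then have "ceval p (\<lambda>i. x i + y i) = 0"
    by (intro vanishes_at_sum_of_double_zeros[OF assms(2-4,7,8)])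
  then show ?thesis
    by (simp add: ceval_mult flip: assms(1))
qed

lemma product_of_linear_forms_not_diagonal:
  fixes a1 a2 a3 b1 b2 b3 :: complex
  assumes "a1 * b1 \<noteq> 0" "a2 * b2 \<noteq> 0" "a3 * b3 \<noteq> 0"
    and "a1 * b2 + a2 * b1 = 0" "a1 * b3 + a3 * b1 = 0" "a2 * b3 + a3 * b2 = 0"
  shows False
proof -
  (* Multiplying the three off-diagonal relations gives P = -P for P = a1 a2 a3 b1 b2 b3. *)
  have "a1 * b2 = - (a2 * b1)" "a2 * b3 = - (a3 * b2)" "a3 * b1 = - (a1 * b3)"
    using assms(4-6) by (simp_all add: eq_neg_iff_add_eq_0 add.commute)
  then have "(a1 * b2) * (a2 * b3) * (a3 * b1) = - ((a2 * b1) * (a3 * b2) * (a1 * b3))"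
    by simp
  then have "2 * ((a1 * b1) * (a2 * b2) * (a3 * b3)) = 0"
    by algebra
  with assms(1-3) show False by simp
qed

lemma factors_not_both_vanish:
  fixes p q :: "mono4 \<Rightarrow>\<^sub>0 complex"
  assumes zeros: "ceval p x = 0" "ceval q x = 0"
    and hessian: "\<And>\<alpha> \<beta> \<gamma>. coeff (line_poly (p * q) x (\<lambda>i. \<alpha> * v1 i + \<beta> * v2 i + \<gamma> * v3 i)) 2
      = \<alpha>\<^sup>2 * h1 + \<beta>\<^sup>2 * h2 + \<gamma>\<^sup>2 * h3"
    and "h1 \<noteq> 0" "h2 \<noteq> 0" "h3 \<noteq> 0"
  shows False
proof -
  (* The Hessian of pq at x is the product of the differentials A and B of p and q. *)
  define A where "A v = coeff (line_poly p x v) 1" for v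
  define B where "B v = coeff (line_poly q x v) 1" for v
  have AB: "coeff (line_poly (p * q) x v) 2 = A v * B v" for v
    unfolding A_def B_def by (rule coeff_2_line_poly_mult[OF zeros])
  have A_add: "A (\<lambda>i. v i + w i) = A v + A w" and B_add: "B (\<lambda>i. v i + w i) = B v + B w" for v w
    unfolding A_def B_def by (rule coeff_1_line_poly_add)+
  have cross: "A v * B w + A w * B v = 0"
    if "coeff (line_poly (p * q) x (\<lambda>i. v i + w i)) 2
      = coeff (line_poly (p * q) x v) 2 + coeff (line_poly (p * q) x w) 2" for v w
    using that by (simp add: AB A_add B_add algebra_simps)
  have H: "coeff (line_poly (p * q) x v1) 2 = h1" "coeff (line_poly (p * q) x v2) 2 = h2"
    "coeff (line_poly (p * q) x v3) 2 = h3"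
    "coeff (line_poly (p * q) x (\<lambda>i. v1 i + v2 i)) 2 = h1 + h2"
    "coeff (line_poly (p * q) x (\<lambda>i. v1 i + v3 i)) 2 = h1 + h3"
    "coeff (line_poly (p * q) x (\<lambda>i. v2 i + v3 i)) 2 = h2 + h3"
    using hessian[of 1 0 0] hessian[of 0 1 0] hessian[of 0 0 1]
      hessian[of 1 1 0] hessian[of 1 0 1] hessian[of 0 1 1] by simp_all
  show False
  proof (rule product_of_linear_forms_not_diagonal)
    show "A v1 * B v1 \<noteq> 0" "A v2 * B v2 \<noteq> 0" "A v3 * B v3 \<noteq> 0"
      using H(1-3) AB[of v1] AB[of v2] AB[of v3] assms(4-6) by simp_all
    show "A v1 * B v2 + A v2 * B v1 = 0" "A v1 * B v3 + A v3 * B v1 = 0"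
      "A v2 * B v3 + A v3 * B v2 = 0"
      by (rule cross, simp only: H)+
  qed
qed

lemma irreducible_if_three_singular_zeros:
  fixes F :: "mono4 \<Rightarrow>\<^sub>0 complex"
  assumes hom: "homogeneous4 4 F" and "F \<noteq> 0"
    and singular: "\<And>x. x \<in> {x1, x2, x3} \<Longrightarrow> singular_zero F x"
    and separated: "\<And>x p q. x \<in> {x1, x2, x3} \<Longrightarrow> p * q = F \<Longrightarrow> ceval p x \<noteq> 0 \<or> ceval q x \<noteq> 0"
    and sums: "\<And>y z. (y, z) \<in> {(x1, x2), (x1, x3), (x2, x3)} \<Longrightarrow> ceval F (\<lambda>i. y i + z i) \<noteq> 0"
  shows "irreducible F"
proof (rule irreducibleI)
  show "F \<noteq> 0" by fact
  show "\<not> F dvd 1"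
  proof
    assume "F dvd 1"
    then obtain G where "F * G = 1" by (metis dvdE)
    then obtain k where "k \<le> 0" "homogeneous4 k F"
      using homogeneous4_factors[OF _ one_neq_zero homogeneous4_one] by blast
    with homogeneous4_unique[OF hom this(2) \<open>F \<noteq> 0\<close>] show False by simp
  qed
  fix p q assume "F = p * q"
  then have pq: "p * q = F" and qp: "q * p = F" by (simp_all add: mult.commute)
  obtain k where k: "k \<le> 4" "homogeneous4 k p" "homogeneous4 (4 - k) q"
    using homogeneous4_factors[OF pq \<open>F \<noteq> 0\<close> hom] by blast
  have "p \<noteq> 0" "q \<noteq> 0" using pq \<open>F \<noteq> 0\<close> by auto
  show "p dvd 1 \<or> q dvd 1"
  proof (cases "k = 0 \<or> k = 4")
    case True
    with k \<open>p \<noteq> 0\<close> \<open>q \<noteq> 0\<close> show ?thesis using homogeneous4_0_unit by auto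
  next
    case False
    then have k13: "1 \<le> k" "k \<le> 3" "1 \<le> 4 - k" "4 - k \<le> 3" using k(1) by auto
    have one_zero: "(ceval p x = 0) \<longleftrightarrow> ceval q x \<noteq> 0" if "x \<in> {x1, x2, x3}" for x
    proof -
      have "ceval p x * ceval q x = 0"
        using singular[OF that] by (simp add: singular_zero_def flip: ceval_mult pq)
      with separated[OF that pq] show ?thesis by auto
    qed
    have "(ceval p x1 = 0) = (ceval p x2 = 0) \<or> (ceval p x1 = 0) = (ceval p x3 = 0)
        \<or> (ceval p x2 = 0) = (ceval p x3 = 0)"
      by (cases "ceval p x1 = 0"; cases "ceval p x2 = 0") simp_all
    then obtain y z where yz: "(y, z) \<in> {(x1, x2), (x1, x3), (x2, x3)}"
      and same: "(ceval p y = 0) = (ceval p z = 0)"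
      by (elim disjE) blast+
    then have "y \<in> {x1, x2, x3}" "z \<in> {x1, x2, x3}" by auto
    note facts = singular[OF this(1)] singular[OF this(2)] one_zero[OF this(1)] one_zero[OF this(2)]
    have "ceval F (\<lambda>i. y i + z i) = 0"
    proof (cases "ceval p y = 0")
      case True
      with same facts show ?thesis
        by (intro factor_vanishes_at_sum[OF pq k(2) k13(1,2)]) simp_all
    next
      case False
      with same facts show ?thesis
        by (intro factor_vanishes_at_sum[OF qp k(3) k13(3,4)]) simp_all
    qed
    with sums[OF yz] show ?thesis by contradiction
  qed
qed

section \<open>Extremal sums of squares\<close>

lemma sum_of_squares_in_P44:
  assumes "\<forall>q\<in>set qs. is_form4 2 q"
  shows "sum_list (map (\<lambda>q. q * q) qs) \<in> P44"
proof -
  have "homogeneous4 4 (sum_list (map (\<lambda>q. q * q) qs))"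
    using assms
  proof (induction qs)
    case Nil
    then show ?case by (simp add: homogeneous4_def)
  next
    case (Cons q qs)
    then show ?case
      by (auto simp: is_form4_iff_homogeneous4
          intro!: homogeneous4_add homogeneous4_mult[of 2 _ 2, simplified])
  qed
  moreover have "peval4 (sum_list (map (\<lambda>q. q * q) qs)) x \<ge> 0" for x
    by (induction qs) (simp_all add: peval4_add peval4_mult peval4_zero)
  ultimately show ?thesis
    by (simp add: P44_def is_form4_iff_homogeneous4)
qed

lemma extremal_sos_is_square:
  assumes ext: "extremal_P44 f" and "f \<in> Sigma44"
  shows "\<exists>c q. c \<noteq> 0 \<and> f = Const4 c * (q * q)"
proof -
  obtain qs where qs: "\<forall>q\<in>set qs. is_form4 2 q" and f: "f = sum_list (map (\<lambda>q. q * q) qs)"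
    using \<open>f \<in> Sigma44\<close> unfolding Sigma44_def by blast
  have "\<exists>q\<in>set qs. q * q \<noteq> 0"
  proof (rule ccontr)
    assume "\<not> (\<exists>q\<in>set qs. q * q \<noteq> 0)"
    then have "f = 0" unfolding f by (induction qs) auto
    with ext show False by (simp add: extremal_P44_def)
  qed
  then obtain q where q: "q \<in> set qs" "q * q \<noteq> 0" by blast
  define h where "h = sum_list (map (\<lambda>q. q * q) (remove1 q qs))"
  have "f = q * q + h"
    unfolding h_def f using q(1) by (rule sum_list_map_remove1)
  moreover have "q * q \<in> P44"
    using sum_of_squares_in_P44[of "[q]"] qs q(1) by simp
  moreover have "h \<in> P44"
    unfolding h_def using qs
    by (intro sum_of_squares_in_P44) (auto dest: set_remove1_subset[THEN subsetD])
  ultimately obtain l where l: "q * q = Const4 l * f"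
    using ext unfolding extremal_P44_def by blast
  with q(2) have "l \<noteq> 0" by (auto simp: Const4_def)
  have "Const4 (1 / l) * Const4 l = (1 :: mono4 \<Rightarrow>\<^sub>0 real)"
    using \<open>l \<noteq> 0\<close> by (simp add: Const4_def mult_single)
  then have "f = Const4 (1 / l) * (q * q)"
    by (simp add: l mult.assoc[symmetric])
  with \<open>l \<noteq> 0\<close> show ?thesis
    by (intro exI[of _ "1 / l"] exI[of _ q]) simp
qed

section \<open>The quartic \<open>gG t u\<close>\<close>

definition s0_at :: "'a::comm_ring_1 \<Rightarrow> 'a \<Rightarrow> 'a \<Rightarrow> 'a \<Rightarrow> 'a" where
  "s0_at a b c d = a^4 + b^4 + c^4 + d^4 - 4*a*b*c*d"
definition s1_at :: "'a::comm_ring_1 \<Rightarrow> 'a \<Rightarrow> 'a \<Rightarrow> 'a \<Rightarrow> 'a" where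
  "s1_at a b c d = a^3*b + a^3*c + a^3*d + b^3*a + b^3*c + b^3*d + c^3*a + c^3*b + c^3*d
     + d^3*a + d^3*b + d^3*c - 12*a*b*c*d"
definition s2_at :: "'a::comm_ring_1 \<Rightarrow> 'a \<Rightarrow> 'a \<Rightarrow> 'a \<Rightarrow> 'a" where
  "s2_at a b c d = a^2*b^2 + a^2*c^2 + a^2*d^2 + b^2*c^2 + b^2*d^2 + c^2*d^2 - 6*a*b*c*d"
definition s3_at :: "'a::comm_ring_1 \<Rightarrow> 'a \<Rightarrow> 'a \<Rightarrow> 'a \<Rightarrow> 'a" where
  "s3_at a b c d = a^2*(b*c + b*d + c*d) + b^2*(a*c + a*d + c*d) + c^2*(a*b + a*d + b*d)
     + d^2*(a*b + a*c + b*c) - 12*a*b*c*d"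

lemma sum_UNIV_4: "(\<Sum>i\<in>(UNIV::4 set). g i) = g 0 + g 1 + g 2 + g 3"
proof -
  have "(4::4) = 0" by simp
  then have "g 4 = g 0" by (rule arg_cong)
  then show ?thesis by (simp only: sum_4) (simp add: ac_simps)
qed

lemma sum_pairs_4:
  "(\<Sum>(i, j)\<in>{(i::4, j::4). Q i j}. g i j) = (\<Sum>i\<in>UNIV. \<Sum>j\<in>UNIV. if Q i j then g i j else 0)"
proof -
  have "(\<Sum>(i, j)\<in>{(i::4, j::4). Q i j}. g i j)
      = (\<Sum>x\<in>UNIV. if Q (fst x) (snd x) then g (fst x) (snd x) else 0)"
    by (subst sum.inter_filter[symmetric]) (simp_all add: split_def Collect_case_prod_Sigma)
  also have "\<dots> = (\<Sum>i\<in>UNIV. \<Sum>j\<in>UNIV. if Q i j then g i j else 0)"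
    by (simp only: UNIV_Times_UNIV[symmetric] sum.cartesian_product split_def)
  finally show ?thesis .
qed

lemma less_4: "(0::4) < 1" "(0::4) < 2" "(0::4) < 3" "(1::4) < 2" "(1::4) < 3" "(2::4) < 3"
  by (simp_all add: less_bit0_def bit0.Rep_numeral bit0.Rep_0 bit0.Rep_1)

lemma not_less_4: "\<not> (1::4) < 0" "\<not> (2::4) < 0" "\<not> (3::4) < 0" "\<not> (2::4) < 1"
    "\<not> (3::4) < 1" "\<not> (3::4) < 2"
  using less_4 by (meson not_less_iff_gr_or_eq order.asym)+

lemmas ceval_real_simps = ceval_real_add ceval_real_diff ceval_real_mult ceval_real_sum
  ceval_real_power ceval_real_Var4 ceval_real_Const4 sum_UNIV_4 sum_pairs_4 less_4 not_less_4

context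
  fixes z :: "4 \<Rightarrow> complex"
begin

lemma ceval_real_s0: "ceval_real s0 z = s0_at (z 0) (z 1) (z 2) (z 3)"
  by (simp add: s0_def abcd4_def s0_at_def ceval_real_simps mult_ac)
lemma ceval_real_s1: "ceval_real s1 z = s1_at (z 0) (z 1) (z 2) (z 3)"
  by (simp add: s1_def T31_def abcd4_def s1_at_def ceval_real_simps mult_ac add_ac)
lemma ceval_real_s2: "ceval_real s2 z = s2_at (z 0) (z 1) (z 2) (z 3)"
  by (simp add: s2_def T22_def abcd4_def s2_at_def ceval_real_simps mult_ac add_ac)
lemma ceval_real_s3: "ceval_real s3 z = s3_at (z 0) (z 1) (z 2) (z 3)"
  by (simp add: s3_def T211_def abcd4_def s3_at_def ceval_real_simps mult_ac add_ac distrib_left)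
lemma ceval_real_s4: "ceval_real s4 z = z 0 * z 1 * z 2 * z 3"
  by (simp add: s4_def abcd4_def ceval_real_simps)

end

definition cG0 :: "'a::comm_ring_1 \<Rightarrow> 'a \<Rightarrow> 'a" where
  "cG0 t u = (4*t + 2)*(u-1)^4 - 3*(t-1)^2*u*(u-1)^2"
definition cG1 :: "'a::comm_ring_1 \<Rightarrow> 'a \<Rightarrow> 'a" where
  "cG1 t u = - 2*(t+1)^2*(u-1)^4 + 2*(t+1)*(t-1)^2*u*(u-1)^2"
definition cG2 :: "'a::comm_ring_1 \<Rightarrow> 'a \<Rightarrow> 'a" where
  "cG2 t u = 4*t^2*(u-1)^4 - 2*(t-1)^2*(2*t-1)*u*(u-1)^2 + 2*(t-1)^4*u^2"
definition cG3 :: "'a::comm_ring_1 \<Rightarrow> 'a \<Rightarrow> 'a" where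
  "cG3 t u = 2*(t+1)^2*(u-1)^4 - (t-1)^2*(t^2+3)*u*(u-1)^2 - 2*(t-1)^4*u^2"
definition cG4 :: "'a::comm_ring_1 \<Rightarrow> 'a \<Rightarrow> 'a" where
  "cG4 t u = 2*(t-1)^4*(u-1)^4"

definition gG_at :: "'a::comm_ring_1 \<Rightarrow> 'a \<Rightarrow> 'a \<Rightarrow> 'a \<Rightarrow> 'a \<Rightarrow> 'a \<Rightarrow> 'a" where
  "gG_at t u a b c d = cG0 t u * s0_at a b c d + cG1 t u * s1_at a b c d + cG2 t u * s2_at a b c d
     + cG3 t u * s3_at a b c d + cG4 t u * (a * b * c * d)"

definition VF_cleared :: "'a::comm_ring_1 \<Rightarrow> 'a \<Rightarrow> 'a" where
  "VF_cleared t u = (3 + 6*t - t^2)*(u-1)^2 - 6*(t-1)^2*u"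

lemma u_omega: "(u::real) \<noteq> 0 \<Longrightarrow> u * omega u = (u - 1)^2"
  by (simp add: omega_def field_simps power2_eq_square)

lemma pG_cleared:
  fixes t u :: real
  assumes "u \<noteq> 0"
  shows "u^2 * pG0 t (omega u) = cG0 t u" "u^2 * pG1 t (omega u) = cG1 t u"
    "u^2 * pG2 t (omega u) = cG2 t u" "u^2 * pG3 t (omega u) = cG3 t u"
    "u^2 * pG4 t (omega u) = cG4 t u"
  using u_omega[OF assms]
  unfolding pG0_def cG0_def pG1_def cG1_def pG2_def cG2_def pG3_def cG3_def pG4_def cG4_def
  by algebra+

lemma VF_omega_cleared:
  fixes t u :: real
  assumes "u \<noteq> 0"
  shows "u^2 * VF t (omega u) = (u - 1)^2 * VF_cleared t u"
  using u_omega[OF assms] unfolding VF_def VF_cleared_def by algebra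

lemma VF_cleared_pos:
  fixes t u :: real
  assumes "u \<noteq> 0" "u \<noteq> 1" "VF t (omega u) > 0"
  shows "VF_cleared t u > 0"
proof -
  have "(u - 1)\<^sup>2 * VF_cleared t u > 0"
    using assms by (simp flip: VF_omega_cleared)
  then show ?thesis by (simp add: zero_less_mult_iff)
qed

lemma VF_cleared_pos_factors:
  fixes t u :: real
  assumes "VF_cleared t u > 0"
  shows "t * u + u - 2 \<noteq> 0" "t + 1 - 2 * u \<noteq> 0"
proof -
  show "t * u + u - 2 \<noteq> 0"
  proof
    assume h: "t * u + u - 2 = 0"
    then have eq: "(t + 1)\<^sup>2 * VF_cleared t u = - ((t - 1) * (t + 3))\<^sup>2"
      unfolding VF_cleared_def by algebra
    have "(t + 1) * u = 2" using h by (simp add: algebra_simps)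
    then have "t + 1 \<noteq> 0" by auto
    then have "(t + 1)\<^sup>2 * VF_cleared t u > 0" using assms by simp
    with eq show False by simp
  qed
  show "t + 1 - 2 * u \<noteq> 0"
  proof
    assume "t + 1 - 2 * u = 0"
    then have "VF_cleared t u = - (2 * (u - 1) * (u + 1))\<^sup>2"
      unfolding VF_cleared_def by algebra
    with assms show False by simp
  qed
qed

lemma of_real_cG:
  "of_real (cG0 t u) = cG0 (of_real t) (of_real u)"
  "of_real (cG1 t u) = cG1 (of_real t) (of_real u)"
  "of_real (cG2 t u) = cG2 (of_real t) (of_real u)"
  "of_real (cG3 t u) = cG3 (of_real t) (of_real u)"
  "of_real (cG4 t u) = cG4 (of_real t) (of_real u)"
  by (simp_all add: cG0_def cG1_def cG2_def cG3_def cG4_def)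

lemma ceval_gG:
  assumes "u \<noteq> 0"
  shows "ceval (complexify4 (gG t u)) z = gG_at (of_real t) (of_real u) (z 0) (z 1) (z 2) (z 3)"
proof -
  have "ceval (complexify4 (gG t u)) z = of_real (u^2) *
    (of_real (pG0 t (omega u)) * s0_at (z 0) (z 1) (z 2) (z 3)
    + of_real (pG1 t (omega u)) * s1_at (z 0) (z 1) (z 2) (z 3)
    + of_real (pG2 t (omega u)) * s2_at (z 0) (z 1) (z 2) (z 3)
    + of_real (pG3 t (omega u)) * s3_at (z 0) (z 1) (z 2) (z 3)
    + of_real (pG4 t (omega u)) * (z 0 * z 1 * z 2 * z 3))"
    by (simp add: ceval_complexify4 gG_def ceval_real_add ceval_real_mult ceval_real_Const4
        ceval_real_s0 ceval_real_s1 ceval_real_s2 ceval_real_s3 ceval_real_s4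
        del: of_real_power)
  also have "\<dots> = of_real (u^2 * pG0 t (omega u)) * s0_at (z 0) (z 1) (z 2) (z 3)
    + of_real (u^2 * pG1 t (omega u)) * s1_at (z 0) (z 1) (z 2) (z 3)
    + of_real (u^2 * pG2 t (omega u)) * s2_at (z 0) (z 1) (z 2) (z 3)
    + of_real (u^2 * pG3 t (omega u)) * s3_at (z 0) (z 1) (z 2) (z 3)
    + of_real (u^2 * pG4 t (omega u)) * (z 0 * z 1 * z 2 * z 3)"
    by (simp add: algebra_simps)
  finally show ?thesis
    by (simp only: pG_cleared[OF assms] of_real_cG gG_at_def)
qed

(* The preliminary simp removes literal powers of 1, on which the normaliser of algebra fails. *)
lemmas gG_at_defs = gG_at_def s0_at_def s1_at_def s2_at_def s3_at_def
  cG0_def cG1_def cG2_def cG3_def cG4_def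

context
  fixes T U :: complex
begin

lemma gG_at_swap_halves: "gG_at T U a b c d = gG_at T U c d a b"
  unfolding gG_at_defs by algebra

lemma gG_at_swap_middle: "gG_at T U a b c d = gG_at T U a c b d"
  unfolding gG_at_defs by algebra

lemma gG_at_P1: "gG_at T U 1 1 U U = 0"
  unfolding gG_at_defs by (simp only: power_one mult_1 mult_1_right) algebra

lemma gG_at_P1_gradient:
  fixes a b c d :: complex
  defines "G k \<equiv> gG_at T U (1 + k * a) (1 + k * b) (U + k * c) (U + k * d)"
  shows "G (-2) - 8 * G (-1) + 8 * G 1 - G 2 = 0"
  unfolding G_def gG_at_defs by (simp only: power_one mult_1 mult_1_right) algebra

lemma gG_at_P1_hessian:
  fixes x y z :: complex
  defines "G k \<equiv> gG_at T U (1 + k * (x + z)) (1 + k * (z - x)) (U + k * y) (U - k * y)"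
  shows "- G 2 + 16 * G 1 - 30 * G 0 + 16 * G (-1) - G (-2) = 24 *
    (x\<^sup>2 * (2 * (U - 1)\<^sup>2 * VF_cleared T U * (T * U + U - 2)\<^sup>2)
     + y\<^sup>2 * (2 * (U - 1)\<^sup>2 * VF_cleared T U * (T + 1 - 2 * U)\<^sup>2)
     + z\<^sup>2 * (2 * (T - 1)^4 * U\<^sup>2 * (U - 1)\<^sup>2 * (U + 1)\<^sup>2))"
  unfolding G_def gG_at_defs VF_cleared_def
  by (simp only: power_one mult_1 mult_1_right mult_zero_left add_0_right diff_0_right) algebra

lemma gG_at_P1_plus_P2:
  "gG_at T U (1 + U) (1 + U) (U + 1) (U + 1) = 2 * (T - 1)^4 * (U - 1)^4 * (U + 1)^4"
  unfolding gG_at_defs by algebra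

lemma gG_at_P1_plus_P3:
  "gG_at T U 2 (1 + U) (U + 1) (2 * U) = 2 * (U - 1)^4 * (T * U + U - 2)\<^sup>2 * (T + 1 - 2 * U)\<^sup>2"
  unfolding gG_at_defs by algebra

lemma gG_at_P2_plus_P3:
  "gG_at T U (U + 1) (2 * U) 2 (1 + U) = 2 * (U - 1)^4 * (T * U + U - 2)\<^sup>2 * (T + 1 - 2 * U)\<^sup>2"
  unfolding gG_at_defs by algebra

end

definition vec4 :: "'a \<Rightarrow> 'a \<Rightarrow> 'a \<Rightarrow> 'a \<Rightarrow> 4 \<Rightarrow> 'a" where
  "vec4 a b c d i = (if i = 0 then a else if i = 1 then b else if i = 2 then c else d)"

lemma vec4_simps [simp]:
  "vec4 a b c d 0 = a" "vec4 a b c d 1 = b" "vec4 a b c d 2 = c" "vec4 a b c d 3 = d"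
  by (simp_all add: vec4_def)

lemma exhaust_4_from_0: "(i::4) = 0 \<or> i = 1 \<or> i = 2 \<or> i = 3"
  using exhaust_4[of i] by auto

(* (a,b,c,d) \<mapsto> (c,d,a,b) and (a,b,c,d) \<mapsto> (a,c,b,d) fix g and move (1,1,u,u) to (u,u,1,1)
   and (1,u,1,u). *)
lemma vec4_perm_involutive:
  assumes "\<sigma> \<in> {id, vec4 2 3 0 1, vec4 0 2 1 3}"
  shows "\<sigma> (\<sigma> i) = i"
  using assms exhaust_4_from_0[of i] by auto

context
  fixes t u :: real
  assumes u: "u \<noteq> 0"
begin

lemma ceval_gG_perm:
  assumes "\<sigma> \<in> {id, vec4 2 3 0 1, vec4 0 2 1 3}"
  shows "ceval (complexify4 (gG t u)) (x \<circ> \<sigma>) = ceval (complexify4 (gG t u)) x"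
proof -
  have "gG_at T U (z 2) (z 3) (z 0) (z 1) = gG_at T U (z 0) (z 1) (z 2) (z 3)"
    "gG_at T U (z 0) (z 2) (z 1) (z 3) = gG_at T U (z 0) (z 1) (z 2) (z 3)"
    for T U :: complex and z :: "4 \<Rightarrow> complex"
    by (rule gG_at_swap_halves gG_at_swap_middle)+
  with assms show ?thesis by (auto simp: ceval_gG[OF u])
qed

lemma line_poly_gG_perm:
  assumes "\<sigma> \<in> {id, vec4 2 3 0 1, vec4 0 2 1 3}"
  shows "line_poly (complexify4 (gG t u)) (x \<circ> \<sigma>) (y \<circ> \<sigma>) = line_poly (complexify4 (gG t u)) x y"
proof -
  have "poly (line_poly (complexify4 (gG t u)) (x \<circ> \<sigma>) (y \<circ> \<sigma>)) e
      = poly (line_poly (complexify4 (gG t u)) x y) e" for e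
    using ceval_gG_perm[OF assms, of "\<lambda>i. x i + e * y i"] by (simp add: poly_line_poly comp_def)
  then show ?thesis
    using poly_eq_poly_eq_iff by blast
qed

lemma singular_zero_gG_perm:
  assumes "singular_zero (complexify4 (gG t u)) x" "\<sigma> \<in> {id, vec4 2 3 0 1, vec4 0 2 1 3}"
  shows "singular_zero (complexify4 (gG t u)) (x \<circ> \<sigma>)"
  unfolding singular_zero_def
proof
  show "ceval (complexify4 (gG t u)) (x \<circ> \<sigma>) = 0"
    using assms by (simp add: ceval_gG_perm singular_zero_def)
  show "\<forall>y. coeff (line_poly (complexify4 (gG t u)) (x \<circ> \<sigma>) y) 1 = 0"
  proof
    fix y :: "4 \<Rightarrow> complex"
    have "y = (y \<circ> \<sigma>) \<circ> \<sigma>"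
      using vec4_perm_involutive[OF assms(2)] by (simp add: fun_eq_iff)
    then have "line_poly (complexify4 (gG t u)) (x \<circ> \<sigma>) y
        = line_poly (complexify4 (gG t u)) x (y \<circ> \<sigma>)"
      using line_poly_gG_perm[OF assms(2), of x "y \<circ> \<sigma>"] by simp
    with assms(1) show "coeff (line_poly (complexify4 (gG t u)) (x \<circ> \<sigma>) y) 1 = 0"
      by (simp add: singular_zero_def)
  qed
qed

end

context
  fixes t u :: real
  assumes u: "u \<noteq> 0" and hom: "homogeneous4 4 (gG t u)"
begin

lemma degree_line_poly_gG: "degree (line_poly (complexify4 (gG t u)) x y) \<le> 4"
  using hom by (simp add: degree_line_poly homogeneous4_complexify4)

lemma singular_zero_gG_P1:
  defines "U \<equiv> complex_of_real u"
  shows "singular_zero (complexify4 (gG t u)) (vec4 1 1 U U)"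
  unfolding singular_zero_def
proof (intro conjI allI)
  show "ceval (complexify4 (gG t u)) (vec4 1 1 U U) = 0"
    by (simp add: ceval_gG[OF u] gG_at_P1 U_def)
  fix y
  have "poly (line_poly (complexify4 (gG t u)) (vec4 1 1 U U) y) k
      = gG_at (of_real t) U (1 + k * y 0) (1 + k * y 1) (U + k * y 2) (U + k * y 3)" for k
    by (simp add: poly_line_poly ceval_gG[OF u] U_def)
  then show "coeff (line_poly (complexify4 (gG t u)) (vec4 1 1 U U) y) 1 = 0"
    using gG_at_P1_gradient[of "of_real t" U "y 0" "y 1" "y 2" "y 3"]
    by (simp only: coeff_1_from_values[OF degree_line_poly_gG]) simp
qed

lemma hessian_gG_P1:
  defines "T \<equiv> complex_of_real t" and "U \<equiv> complex_of_real u"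
  shows "coeff (line_poly (complexify4 (gG t u)) (vec4 1 1 U U)
      (\<lambda>i. \<alpha> * vec4 1 (-1) 0 0 i + \<beta> * vec4 0 0 1 (-1) i + \<gamma> * vec4 1 1 0 0 i)) 2
    = \<alpha>\<^sup>2 * (2 * (U - 1)\<^sup>2 * VF_cleared T U * (T * U + U - 2)\<^sup>2)
    + \<beta>\<^sup>2 * (2 * (U - 1)\<^sup>2 * VF_cleared T U * (T + 1 - 2 * U)\<^sup>2)
    + \<gamma>\<^sup>2 * (2 * (T - 1)^4 * U\<^sup>2 * (U - 1)\<^sup>2 * (U + 1)\<^sup>2)"
  using gG_at_P1_hessian[of T U \<alpha> \<gamma> \<beta>]
  by (simp add: coeff_2_from_values[OF degree_line_poly_gG] poly_line_poly ceval_gG[OF u]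
      T_def U_def algebra_simps)

end

context
  fixes t u :: real
  assumes t: "t \<noteq> 1" and u: "u \<notin> {0, 1, -1}" and VF: "VF t (omega u) > 0"
    and hom: "homogeneous4 4 (gG t u)"
begin

lemma gG_parameters_nonzero:
  defines "T \<equiv> complex_of_real t" and "U \<equiv> complex_of_real u"
  shows "U \<noteq> 0" "U - 1 \<noteq> 0" "U + 1 \<noteq> 0" "T - 1 \<noteq> 0" "VF_cleared T U \<noteq> 0"
    "T * U + U - 2 \<noteq> 0" "T + 1 - 2 * U \<noteq> 0"
proof -
  have pos: "VF_cleared t u > 0"
    using u VF by (intro VF_cleared_pos) auto
  have "VF_cleared T U = of_real (VF_cleared t u)" "T * U + U - 2 = of_real (t * u + u - 2)"
    "T + 1 - 2 * U = of_real (t + 1 - 2 * u)" "U - 1 = of_real (u - 1)" "U + 1 = of_real (u + 1)"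
    "T - 1 = of_real (t - 1)"
    by (simp_all add: VF_cleared_def T_def U_def)
  with t u pos VF_cleared_pos_factors[OF pos]
  show "U \<noteq> 0" "U - 1 \<noteq> 0" "U + 1 \<noteq> 0" "T - 1 \<noteq> 0" "VF_cleared T U \<noteq> 0"
    "T * U + U - 2 \<noteq> 0" "T + 1 - 2 * U \<noteq> 0"
    by (simp_all add: U_def del: of_real_add of_real_diff of_real_mult)
qed

lemma gG_factors_not_both_vanish:
  defines "P1 \<equiv> vec4 1 1 (complex_of_real u) (complex_of_real u)"
  assumes \<sigma>: "\<sigma> \<in> {id, vec4 2 3 0 1, vec4 0 2 1 3}" and pq: "p * q = complexify4 (gG t u)"
  shows "ceval p (P1 \<circ> \<sigma>) \<noteq> 0 \<or> ceval q (P1 \<circ> \<sigma>) \<noteq> 0"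
proof (rule ccontr)
  assume "\<not> ?thesis"
  then have zeros: "ceval p (P1 \<circ> \<sigma>) = 0" "ceval q (P1 \<circ> \<sigma>) = 0" by simp_all
  have u0: "u \<noteq> 0" using u by simp
  have "coeff (line_poly (p * q) (P1 \<circ> \<sigma>) (\<lambda>i. \<alpha> * (vec4 1 (-1) 0 0 \<circ> \<sigma>) i
        + \<beta> * (vec4 0 0 1 (-1) \<circ> \<sigma>) i + \<gamma> * (vec4 1 1 0 0 \<circ> \<sigma>) i)) 2
    = coeff (line_poly (complexify4 (gG t u)) P1
        (\<lambda>i. \<alpha> * vec4 1 (-1) 0 0 i + \<beta> * vec4 0 0 1 (-1) i + \<gamma> * vec4 1 1 0 0 i)) 2"
    for \<alpha> \<beta> \<gamma>
    using line_poly_gG_perm[OF u0 \<sigma>, where x = P1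
        and y = "\<lambda>i. \<alpha> * vec4 1 (-1) 0 0 i + \<beta> * vec4 0 0 1 (-1) i + \<gamma> * vec4 1 1 0 0 i"]
    by (simp add: pq comp_def)
  note hessian = this[unfolded P1_def hessian_gG_P1[OF u0 hom]]
  show False
    using factors_not_both_vanish[OF zeros[unfolded P1_def] hessian] gG_parameters_nonzero
    by simp
qed

lemma gG_sums_nonzero:
  defines "P1 \<equiv> vec4 1 1 (complex_of_real u) (complex_of_real u)"
  assumes "(y, z) \<in> {(P1, P1 \<circ> vec4 2 3 0 1), (P1, P1 \<circ> vec4 0 2 1 3),
      (P1 \<circ> vec4 2 3 0 1, P1 \<circ> vec4 0 2 1 3)}"
  shows "ceval (complexify4 (gG t u)) (\<lambda>i. y i + z i) \<noteq> 0"
  using assms u gG_parameters_nonzero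
  by (auto simp: ceval_gG gG_at_P1_plus_P2 gG_at_P1_plus_P3 gG_at_P2_plus_P3)

lemma irreducible_complexify4_gG:
  assumes "gG t u \<noteq> 0"
  shows "irreducible (complexify4 (gG t u))"
proof -
  define P1 where "P1 = vec4 1 1 (complex_of_real u) (complex_of_real u)"
  have perm: "\<exists>\<sigma>\<in>{id, vec4 2 3 0 1, vec4 0 2 1 3}. x = P1 \<circ> \<sigma>"
    if "x \<in> {P1, P1 \<circ> vec4 2 3 0 1, P1 \<circ> vec4 0 2 1 3}" for x
    using that by force
  show ?thesis
  proof (rule irreducible_if_three_singular_zeros)
    show "homogeneous4 4 (complexify4 (gG t u))"
      using hom by (simp add: homogeneous4_complexify4)
    show "complexify4 (gG t u) \<noteq> 0"
      using assms by (metis keys_complexify4 keys_eq_empty)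
    fix x assume "x \<in> {P1, P1 \<circ> vec4 2 3 0 1, P1 \<circ> vec4 0 2 1 3}"
    then obtain \<sigma> where \<sigma>: "\<sigma> \<in> {id, vec4 2 3 0 1, vec4 0 2 1 3}" and x: "x = P1 \<circ> \<sigma>"
      using perm by blast
    show "singular_zero (complexify4 (gG t u)) x"
      unfolding x P1_def using u by (intro singular_zero_gG_perm singular_zero_gG_P1 hom \<sigma>) auto
    show "ceval p x \<noteq> 0 \<or> ceval q x \<noteq> 0" if "p * q = complexify4 (gG t u)" for p q
      unfolding x P1_def by (rule gG_factors_not_both_vanish[OF \<sigma> that])
  qed (use gG_sums_nonzero in \<open>simp add: P1_def\<close>)
qed

lemma gG_not_sos:
  assumes "extremal_P44 (gG t u)"
  shows "gG t u \<notin> Sigma44"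
proof
  assume "gG t u \<in> Sigma44"
  then obtain c q where "c \<noteq> 0" and cq: "gG t u = Const4 c * (q * q)"
    using extremal_sos_is_square[OF assms] by blast
  define P1 where "P1 = vec4 1 1 (complex_of_real u) (complex_of_real u)"
  have pq: "complexify4 (Const4 c * q) * complexify4 q = complexify4 (gG t u)"
    by (simp add: cq complexify4_mult mult.assoc)
  have "ceval (complexify4 (gG t u)) P1 = 0"
    using u singular_zero_gG_P1[OF _ hom] by (simp add: singular_zero_def P1_def)
  then have "of_real c * ceval (complexify4 q) P1 ^ 2 = 0"
    by (simp add: cq complexify4_mult ceval_mult ceval_complexify4 ceval_real_mult
        ceval_real_Const4 power2_eq_square mult.assoc)
  with \<open>c \<noteq> 0\<close> have "ceval (complexify4 q) P1 = 0" by simp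
  moreover from this have "ceval (complexify4 (Const4 c * q)) P1 = 0"
    by (simp add: ceval_complexify4 ceval_real_mult)
  ultimately show False
    using gG_factors_not_both_vanish[OF _ pq, of id] by (simp add: P1_def)
qed

end

theorem theorem2p6:
  fixes t u :: real
  assumes "t \<noteq> 1"
    and "u \<notin> {0, 1, -1}"
    and "VF t (omega u) > 0"
    and "extremal_P44 (gG t u)"
  shows "irreducible (complexify4 (gG t u)) \<and> gG t u \<notin> Sigma44"
proof -
  have "homogeneous4 4 (gG t u)" and "gG t u \<noteq> 0"
    using assms(4) by (simp_all add: extremal_P44_def P44_def is_form4_iff_homogeneous4)
  then show ?thesis
    using irreducible_complexify4_gG gG_not_sos assms by blast
qed

end
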